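(* Let $r \geq 3$ and let $G$ be a graph on vertex set $[n]$ that percolates in the $K_r$-bootstrap percolation process, i.e. $\langle G \rangle_{K_r} = E(K_n)$. Then $G$ is $(r-2)$-connected.
   Context: $K_r$-bootstrap percolation: for a graph $G$ on vertex set $[n]$ (identified with its edge set $\subseteq E(K_n)$), set $G_0 := G$ and $G_{t+1} := G_t \cup \{e \in E(K_n) : \exists$ a copy $H$ of $K_r$ with $e \in H \subseteq G_t \cup \{e\}\}$; the closure is $\langle G \rangle_{K_r} := \bigcup_t G_t$, and $G$ percolates if its closure is all of $E(K_n)$. *)

theory Defs
  imports Main
begin

(* Vertex set [n] is rendered as {0..<n}; edges are 2-element sets {u,v}. *)

definition Kn_edges :: "nat \<Rightarrow> nat set set" where
  "Kn_edges n = {{u, v} | u v. u < n \<and> v < n \<and> u \<noteq> v}"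

definition clique_edges :: "nat set \<Rightarrow> nat set set" where
  "clique_edges S = {{u, v} | u v. u \<in> S \<and> v \<in> S \<and> u \<noteq> v}"

definition bp_step :: "nat \<Rightarrow> nat \<Rightarrow> nat set set \<Rightarrow> nat set set" where
  "bp_step n r G = G \<union> {e \<in> Kn_edges n. \<exists>S. S \<subseteq> {0..<n} \<and> card S = r \<and>
        e \<in> clique_edges S \<and> clique_edges S \<subseteq> G \<union> {e}}"

definition bp_closure :: "nat \<Rightarrow> nat \<Rightarrow> nat set set \<Rightarrow> nat set set" where
  "bp_closure n r G = (\<Union>t. (bp_step n r ^^ t) G)"

definition percolates :: "nat \<Rightarrow> nat \<Rightarrow> nat set set \<Rightarrow> bool" where
  "percolates n r G \<longleftrightarrow> bp_closure n r G = Kn_edges n"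

definition connected_on :: "nat set \<Rightarrow> nat set set \<Rightarrow> bool" where
  "connected_on V E \<longleftrightarrow> (\<forall>u\<in>V. \<forall>v\<in>V.
      (u, v) \<in> {(x, y). x \<in> V \<and> y \<in> V \<and> {x, y} \<in> E}\<^sup>*)"

definition k_connected :: "nat \<Rightarrow> nat \<Rightarrow> nat set set \<Rightarrow> bool" where
  "k_connected n k G \<longleftrightarrow> n > k \<and>
     (\<forall>X. X \<subseteq> {0..<n} \<and> card X < k \<longrightarrow> connected_on ({0..<n} - X) G)"

end

theory Submission
  imports Defs
begin

text \<open>Delete a set \<open>X\<close> of fewer than \<open>r - 2\<close> vertices, let \<open>A\<close> be a component of
\<open>G - X\<close> and \<open>B\<close> the remaining vertices. An edge \<open>xy\<close> between \<open>A\<close> and \<open>B\<close> can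
only be added by a copy of \<open>K\<^sub>r\<close> through \<open>x\<close> and \<open>y\<close>; having more than
\<open>|X| + 2\<close> vertices, it has a third vertex \<open>c\<close> outside \<open>X\<close>, and then one of \<open>xc\<close>,
\<open>cy\<close> is an edge between \<open>A\<close> and \<open>B\<close> that was already present. So no such edge
ever appears, and percolation forces \<open>B = {}\<close>.\<close>

definition no_edge_between :: "nat set \<Rightarrow> nat set \<Rightarrow> nat set set \<Rightarrow> bool" where
  "no_edge_between A B E \<longleftrightarrow> (\<forall>x\<in>A. \<forall>y\<in>B. {x, y} \<notin> E)"

lemma doubleton_in_clique_edges:
  "x \<in> S \<Longrightarrow> y \<in> S \<Longrightarrow> x \<noteq> y \<Longrightarrow> {x, y} \<in> clique_edges S"
  unfolding clique_edges_def by blast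

lemma ends_in_clique_if_in_clique_edges:
  "{x, y} \<in> clique_edges S \<Longrightarrow> x \<in> S \<and> y \<in> S"
  unfolding clique_edges_def by (auto simp: doubleton_eq_iff)

lemma exists_third_vertex_outside:
  assumes "finite S" and "finite X" and "card X + 2 < card S"
  obtains c where "c \<in> S" "c \<notin> X" "c \<noteq> x" "c \<noteq> y"
proof -
  have "card {x, y} \<le> 2" by (simp add: card_insert_if)
  then have "card (X \<union> {x, y}) \<le> card X + 2"
    using card_Un_le[of X "{x, y}"] by linarith
  then have "card (X \<union> {x, y}) < card S" using assms(3) by linarith
  then have "\<not> S \<subseteq> X \<union> {x, y}"
    using assms(2) card_mono[of "X \<union> {x, y}" S] by auto
  then show thesis using that by blast
qed

lemma bp_step_no_edge_between:
  assumes "finite X" and "card X + 2 < r"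
    and "no_edge_between A ({0..<n} - X - A) H"
  shows "no_edge_between A ({0..<n} - X - A) (bp_step n r H)"
  unfolding no_edge_between_def
proof (intro ballI notI)
  fix x y
  assume x: "x \<in> A" and y: "y \<in> {0..<n} - X - A" and xy: "{x, y} \<in> bp_step n r H"
  have "{x, y} \<notin> H" using assms(3) x y unfolding no_edge_between_def by blast
  then obtain S where S: "S \<subseteq> {0..<n}" "card S = r" "{x, y} \<in> clique_edges S"
      "clique_edges S \<subseteq> H \<union> {{x, y}}"
    using xy unfolding bp_step_def by blast
  have "x \<in> S" "y \<in> S" using ends_in_clique_if_in_clique_edges[OF S(3)] by auto
  obtain c where c: "c \<in> S" "c \<notin> X" "c \<noteq> x" "c \<noteq> y"
    using exists_third_vertex_outside[of S X] S(1,2) assms(1,2) finite_subset by blast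
  have "{x, c} \<in> H" "{c, y} \<in> H"
    using S(4) c \<open>x \<in> S\<close> \<open>y \<in> S\<close> doubleton_in_clique_edges
    by (auto simp: doubleton_eq_iff)
  moreover have "c \<in> {0..<n} - X" using c S(1) by blast
  ultimately show False
    using assms(3) x y unfolding no_edge_between_def by (cases "c \<in> A") auto
qed

lemma bp_closure_no_edge_between:
  assumes "finite X" and "card X + 2 < r"
    and "no_edge_between A ({0..<n} - X - A) G"
  shows "no_edge_between A ({0..<n} - X - A) (bp_closure n r G)"
proof -
  have "no_edge_between A ({0..<n} - X - A) ((bp_step n r ^^ t) G)" for t
    by (induction t) (simp_all add: assms(3) bp_step_no_edge_between[OF assms(1,2)])
  then show ?thesis
    unfolding bp_closure_def no_edge_between_def by blast
qed

lemma not_connected_on_imp_cut: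
  assumes "\<not> connected_on V E"
  obtains A u v where "A \<subseteq> V" "u \<in> A" "v \<in> V - A" "no_edge_between A (V - A) E"
proof -
  let ?R = "{(x, y). x \<in> V \<and> y \<in> V \<and> {x, y} \<in> E}"
  obtain u v where u: "u \<in> V" and v: "v \<in> V" and uv: "(u, v) \<notin> ?R\<^sup>*"
    using assms unfolding connected_on_def by blast
  define A where "A = {w \<in> V. (u, w) \<in> ?R\<^sup>*}"
  have "no_edge_between A (V - A) E"
    unfolding no_edge_between_def
  proof (intro ballI notI)
    fix x y assume x: "x \<in> A" and y: "y \<in> V - A" and "{x, y} \<in> E"
    then have "(x, y) \<in> ?R" unfolding A_def by blast
    with x have "(u, y) \<in> ?R\<^sup>*" unfolding A_def by (blast intro: rtrancl_into_rtrancl)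
    with y show False unfolding A_def by blast
  qed
  moreover have "A \<subseteq> V" "u \<in> A" "v \<in> V - A" using u v uv unfolding A_def by auto
  ultimately show thesis using that by blast
qed

theorem mainTheorem5:
  fixes n r :: nat and G :: "nat set set"
  assumes "r \<ge> 3"
    and "n \<ge> r - 1"
    and "G \<subseteq> Kn_edges n"
    and "percolates n r G"
  shows "k_connected n (r - 2) G"
  unfolding k_connected_def
proof (intro conjI allI impI)
  show "r - 2 < n" using assms(1,2) by linarith
  fix X assume X: "X \<subseteq> {0..<n} \<and> card X < r - 2"
  show "connected_on ({0..<n} - X) G"
  proof (rule ccontr)
    assume "\<not> connected_on ({0..<n} - X) G"
    then obtain A u v where A: "A \<subseteq> {0..<n} - X" "u \<in> A" "v \<in> {0..<n} - X - A"
        and cut: "no_edge_between A ({0..<n} - X - A) G"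
      by (rule not_connected_on_imp_cut)
    have "u \<noteq> v" "u < n" "v < n" using A by auto
    then have "{u, v} \<in> Kn_edges n" unfolding Kn_edges_def by blast
    then have "{u, v} \<in> bp_closure n r G" using assms(4) unfolding percolates_def by simp
    moreover have "no_edge_between A ({0..<n} - X - A) (bp_closure n r G)"
      using X cut finite_subset[of X "{0..<n}"]
      by (intro bp_closure_no_edge_between) auto
    ultimately show False using A unfolding no_edge_between_def by blast
  qed
qed

end
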